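(* Assume $\Sigma_0=I$, $T>0$, and $R\in M_d(\mathbb{R})$ is a normal matrix satisfying Property (P1). Consider the characteristic equation (with parameter $\lambda\ge0$) $$\lambda\,{\sf C}=F^\top(R-F),\qquad F:=e^{T({\sf C}-{\sf C}^\top)}e^{T{\sf C}^\top}.$$ (i) For $\lambda=0$, a normal matrix ${\sf C}\in M_d(\mathbb{R})$ solves the equation if and only if $e^{T{\sf C}}=R$, i.e. the normal solutions are ${\sf C}=\frac1T L$ where $L\in M_d(\mathbb{R})$ is a (normal) real matrix logarithm of $R$, $e^{L}=R$. (ii) For each such solution ${\sf C}(0)=\frac1T L$ (with $L$ normal, real, $e^L=R$), there exist a neighborhood $\mathcal{N}\subset\mathbb{R}^+$ of $\lambda=0$ and a continuous map $\mathcal{N}\ni\lambda\mapsto{\sf C}(\lambda)\in M_d(\mathbb{R})$ such that ${\sf C}(\lambda)$ is a (normal) solution of the characteristic equation for each $\lambda\in\mathcal N$, ${\sf C}(0)=\frac1TL$, and $${\sf C}(\lambda)=\frac1T L-\frac{\lambda}{T^2}(RR^\top)^{-1}L+O(\lambda^2)\qquad(\lambda\downarrow0).$$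
   Context: Property (P1): the matrix $R\in M_d(\mathbb{R})$ has no eigenvalues in $\mathbb{R}^-=\{x\in\mathbb{R}: x\le 0\}$, and $R$ is non-derogatory (no eigenvalue of $R$ appears in more than one Jordan block). Under (P1) there exist real matrices $L$ with $e^L=R$ (real matrix logarithms, not necessarily unique). $\mathbb{R}^+=\{x\in\mathbb{R}:x\ge0\}$. A real matrix $M$ is normal if $MM^\top=M^\top M$. The characteristic equation above is the case $\Sigma_0=\mathbb{E}[X_0X_0^\top]=I$ of the equation $\lambda{\sf C}=F^\top(R-F)\Sigma_0$ whose solutions parametrize the critical points $A_t=e^{2t\Omega}{\sf C}e^{-2t\Omega}$, $\Omega=\frac12({\sf C}-{\sf C}^\top)$, of the regularized loss ${\sf J}[A]=\mathbb{E}[\frac\lambda2\int_0^T\mathrm{tr}(A_t^\top A_t)dt+\frac12|X_T-Z|^2]$. *)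

theory Defs
  imports "HOL-Analysis.Analysis"
begin

primrec mpow :: "real^'n^'n \<Rightarrow> nat \<Rightarrow> real^'n^'n" where
  "mpow A 0 = mat 1"
| "mpow A (Suc k) = A ** mpow A k"

definition mexp :: "real^'n^'n \<Rightarrow> real^'n^'n" where
  "mexp A = (\<Sum>k. (1 / fact k) *\<^sub>R mpow A k)"

definition normal_mat :: "real^'n^'n \<Rightarrow> bool" where
  "normal_mat M \<longleftrightarrow> M ** transpose M = transpose M ** M"

definition cmat :: "real^'n^'n \<Rightarrow> complex^'n^'n" where
  "cmat M = (\<chi> i j. complex_of_real (M $ i $ j))"

text \<open>Property (P1): no (real) eigenvalue in (-infinity,0], and non-derogatory:
  every (complex) eigenvalue has geometric multiplicity one, i.e. appears in
  exactly one Jordan block.\<close>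
definition P1 :: "real^'n^'n \<Rightarrow> bool" where
  "P1 R \<longleftrightarrow>
     (\<forall>\<mu>::real. \<forall>v::real^'n. v \<noteq> 0 \<and> R *v v = \<mu> *\<^sub>R v \<longrightarrow> \<mu> > 0) \<and>
     (\<forall>\<mu>::complex. \<forall>u v :: complex^'n.
        cmat R *v u = \<mu> *s u \<and> cmat R *v v = \<mu> *s v \<longrightarrow>
        (\<exists>a b :: complex. (a \<noteq> 0 \<or> b \<noteq> 0) \<and> a *s u + b *s v = 0))"

definition Fmap :: "real \<Rightarrow> real^'n^'n \<Rightarrow> real^'n^'n" where
  "Fmap T C = mexp (T *\<^sub>R (C - transpose C)) ** mexp (T *\<^sub>R transpose C)"

definition char_eq :: "real \<Rightarrow> real^'n^'n \<Rightarrow> real \<Rightarrow> real^'n^'n \<Rightarrow> bool" where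
  "char_eq T R lam C \<longleftrightarrow> lam *\<^sub>R C = transpose (Fmap T C) ** (R - Fmap T C)"

end

(*
  For normal C the factors of F = e^{T(C - C^T)} e^{T C^T} commute, so F = e^{TC} and at
  lambda = 0 the equation reads e^{T C^T} (R - e^{TC}) = 0, i.e. e^{TC} = R.

  For lambda > 0 write C = (L + X)/T with X in the bicommutant A of {L, L^T}: since L is
  normal, A is a closed commutative algebra stable under transposition, so every matrix
  exponential below factorises. With q = (R R^T)^{-1} = e^{-(L + L^T)} the equation becomes
  e^{X^T} (1 - e^X) = (lambda/T) q (L + X). Its left-hand side is -X plus a term that is
  quadratically small, so for small lambda the equation is the fixed-point problem of a
  uniform contraction on a small ball of A. The fixed point X(lambda) is Lipschitz in
  lambda, vanishes at 0 and, by the quadratic bound, equals -(lambda/T) q L + O(lambda^2).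
*)

theory Submission
  imports Defs
begin

section \<open>Exponentials in Banach algebras\<close>

lemma norm_exp_minus_partial_sum_le:
  fixes z :: "'a::{real_normed_algebra_1,banach}"
  shows "norm (exp z - (\<Sum>n<k. inverse (fact n) *\<^sub>R z ^ n))
    \<le> exp (norm z) - (\<Sum>n<k. inverse (fact n) * norm z ^ n)"
proof -
  have summable: "summable (\<lambda>n. inverse (fact (n + k)) * norm z ^ (n + k))"
    using summable_ignore_initial_segment[OF summable_exp[of "norm z"], of k] by simp
  have "norm (\<Sum>n. inverse (fact (n + k)) *\<^sub>R z ^ (n + k))
      \<le> (\<Sum>n. inverse (fact (n + k)) * norm z ^ (n + k))"
    by (rule norm_suminf_le[OF _ summable]) (simp add: norm_power_ineq mult_left_mono)
  then show ?thesis
    using exp_first_terms[of z k] exp_first_terms[of "norm z" k] by simp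
qed

lemma norm_exp_minus_one_le:
  fixes z :: "'a::{real_normed_algebra_1,banach}"
  assumes "norm z \<le> 1"
  shows "norm (exp z - 1) \<le> 2 * norm z"
proof -
  have "exp (norm z) \<le> 1 + norm z + (norm z)\<^sup>2" and "(norm z)\<^sup>2 \<le> norm z"
    using exp_bound[of "norm z"] assms by (simp_all add: power2_eq_square mult_left_le)
  then show ?thesis
    using norm_exp_minus_partial_sum_le[of z 1] by simp
qed

lemma norm_exp_minus_one_minus_le:
  fixes z :: "'a::{real_normed_algebra_1,banach}"
  assumes "norm z \<le> 1"
  shows "norm (exp z - 1 - z) \<le> (norm z)\<^sup>2"
  using exp_bound[of "norm z"] norm_exp_minus_partial_sum_le[of z 2] assms
  by (simp add: eval_nat_numeral diff_diff_eq)

lemma exp_mult_commute: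
  fixes x y :: "'a::{real_normed_algebra_1,banach}"
  assumes "x * y = y * x"
  shows "exp x * y = y * exp x"
proof -
  have "(\<lambda>n. x ^ n /\<^sub>R fact n * y) sums (exp x * y)"
    and "(\<lambda>n. y * (x ^ n /\<^sub>R fact n)) sums (y * exp x)"
    by (rule bounded_linear.sums[OF bounded_linear_mult_left exp_converges],
        rule bounded_linear.sums[OF bounded_linear_mult_right exp_converges])
  moreover have "x ^ n /\<^sub>R fact n * y = y * (x ^ n /\<^sub>R fact n)" for n
    using power_commuting_commutes[OF assms] by simp
  ultimately show ?thesis
    using sums_unique2 by fastforce
qed

definition exp_tail :: "'a::{real_normed_algebra_1,banach} \<Rightarrow> 'a" where
  "exp_tail x = exp x - 1 - x"

lemma exp_tail_lipschitz:
  fixes x y :: "'a::{real_normed_algebra_1,banach}"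
  assumes "x * y = y * x" and "norm x \<le> \<rho>" and "norm y \<le> \<rho>" and "\<rho> \<le> 1/2"
  shows "norm (exp_tail x - exp_tail y) \<le> 6 * \<rho> * norm (x - y)"
proof -
  define d where "d = x - y"
  have "y * d = d * y"
    using assms(1) by (simp add: d_def algebra_simps)
  then have "exp x = exp y * exp d"
    using exp_add_commuting[of y d] by (simp add: d_def)
  then have split: "exp_tail x - exp_tail y = (exp y - 1) * (exp d - 1) + (exp d - 1 - d)"
    by (simp add: exp_tail_def d_def algebra_simps)
  have nd: "norm d \<le> 2 * \<rho>"
    using assms(2,3) norm_triangle_ineq4[of x y] by (simp add: d_def)
  have "norm (exp y - 1) \<le> 2 * \<rho>"
    using norm_exp_minus_one_le[of y] assms(3,4) by simp
  moreover have "norm (exp d - 1) \<le> 2 * norm d"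
    using norm_exp_minus_one_le[of d] nd assms(4) by simp
  moreover have "norm (exp d - 1 - d) \<le> 2 * \<rho> * norm d"
    using norm_exp_minus_one_minus_le[of d] nd assms(4)
    by (simp add: power2_eq_square mult_right_mono order_trans)
  ultimately have "norm (exp_tail x - exp_tail y) \<le> 2 * \<rho> * (2 * norm d) + 2 * \<rho> * norm d"
    unfolding split
    by (smt (verit) mult_mono' norm_ge_zero norm_mult_ineq norm_triangle_ineq)
  then show ?thesis
    by (simp add: d_def algebra_simps)
qed

lemma exp_tail_lipschitz_linear:
  fixes f :: "'a::real_normed_vector \<Rightarrow> 'b::{real_normed_algebra_1,banach}"
  assumes "bounded_linear f" and "0 \<le> K" and f_le: "\<And>z. norm (f z) \<le> K * norm z"
    and "f x * f y = f y * f x" and "norm x \<le> \<rho>" and "norm y \<le> \<rho>" and "K * \<rho> \<le> 1/2"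
  shows "norm (exp_tail (f x) - exp_tail (f y)) \<le> 6 * K\<^sup>2 * \<rho> * norm (x - y)"
proof -
  have "norm (f z) \<le> K * \<rho>" if "norm z \<le> \<rho>" for z
    using f_le[of z] mult_left_mono[OF that \<open>0 \<le> K\<close>] by linarith
  then have "norm (exp_tail (f x) - exp_tail (f y)) \<le> 6 * (K * \<rho>) * norm (f x - f y)"
    using assms(4-7) by (intro exp_tail_lipschitz) auto
  also have "\<dots> \<le> 6 * (K * \<rho>) * (K * norm (x - y))"
    using f_le[of "x - y"] assms(2) order_trans[OF norm_ge_zero assms(5)]
    by (intro mult_left_mono) (simp_all add: linear_diff[OF bounded_linear.linear[OF assms(1)]])
  finally show ?thesis
    by (simp add: power2_eq_square mult_ac)
qed

section \<open>Commutants\<close>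

definition commutant :: "'a::ring set \<Rightarrow> 'a set" where
  "commutant S = {x. \<forall>y\<in>S. x * y = y * x}"

lemma commutant_iff: "x \<in> commutant S \<longleftrightarrow> (\<forall>y\<in>S. x * y = y * x)"
  by (simp add: commutant_def)

lemma commutant_add: "x \<in> commutant S \<Longrightarrow> y \<in> commutant S \<Longrightarrow> x + y \<in> commutant S"
  by (simp add: commutant_iff algebra_simps)

lemma commutant_diff: "x \<in> commutant S \<Longrightarrow> y \<in> commutant S \<Longrightarrow> x - y \<in> commutant S"
  by (simp add: commutant_iff algebra_simps)

lemma commutant_uminus: "x \<in> commutant S \<Longrightarrow> - x \<in> commutant S"
  by (simp add: commutant_iff)

lemma commutant_mult: "x \<in> commutant S \<Longrightarrow> y \<in> commutant S \<Longrightarrow> x * y \<in> commutant S"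
  by (simp add: commutant_iff) (metis mult.assoc)

lemma commutant_one: "(1 :: 'a::ring_1) \<in> commutant S"
  by (simp add: commutant_iff)

lemma commutant_zero: "0 \<in> commutant S"
  by (simp add: commutant_iff)

lemma commutant_scaleR: "x \<in> commutant S \<Longrightarrow> r *\<^sub>R (x :: 'a::real_algebra_1) \<in> commutant S"
  by (simp add: commutant_iff)

lemma commutant_exp: "x \<in> commutant S \<Longrightarrow> exp (x :: 'a::{real_normed_algebra_1,banach}) \<in> commutant S"
  by (simp add: commutant_iff exp_mult_commute)

lemma closed_commutant: "closed (commutant (S :: 'a::real_normed_algebra_1 set))"
proof -
  have "commutant S = (\<Inter>y\<in>S. {x. x * y = y * x})"
    by (auto simp: commutant_def)
  then show ?thesis
    by (auto intro!: closed_Collect_eq continuous_intros)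
qed

lemma subset_commutant_commutant: "S \<subseteq> commutant (commutant S)"
  by (simp add: subset_iff commutant_iff)

lemma commutant_antimono: "S \<subseteq> S' \<Longrightarrow> commutant S' \<subseteq> commutant S"
  unfolding commutant_def by blast

lemma commutant_commutant_commute:
  assumes "S \<subseteq> commutant S" and "x \<in> commutant (commutant S)" and "y \<in> commutant (commutant S)"
  shows "x * y = y * x"
proof -
  have "y \<in> commutant S"
    using commutant_antimono[OF assms(1)] assms(3) by blast
  then show ?thesis
    using assms(2) by (simp add: commutant_iff)
qed

section \<open>Uniform contractions\<close>

lemma uniform_contraction_fixpoint:
  fixes \<Phi> :: "'p::metric_space \<Rightarrow> 'a::metric_space \<Rightarrow> 'a"
  assumes "complete S" and "S \<noteq> {}" and "0 \<le> c" and "c < 1" and "0 \<le> K"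
    and maps: "\<And>t. t \<in> I \<Longrightarrow> \<Phi> t ` S \<subseteq> S"
    and contraction: "\<And>t x y. t \<in> I \<Longrightarrow> x \<in> S \<Longrightarrow> y \<in> S \<Longrightarrow> dist (\<Phi> t x) (\<Phi> t y) \<le> c * dist x y"
    and parameter: "\<And>s t x. s \<in> I \<Longrightarrow> t \<in> I \<Longrightarrow> x \<in> S \<Longrightarrow> dist (\<Phi> s x) (\<Phi> t x) \<le> K * dist s t"
  obtains e where "\<And>t. t \<in> I \<Longrightarrow> e t \<in> S \<and> \<Phi> t (e t) = e t"
    and "\<And>t x. t \<in> I \<Longrightarrow> x \<in> S \<Longrightarrow> dist (e t) x \<le> dist (\<Phi> t x) x / (1 - c)"
    and "(K / (1 - c))-lipschitz_on I e"
proof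
  define e where "e t = (THE x. x \<in> S \<and> \<Phi> t x = x)" for t
  show fixpoint: "e t \<in> S \<and> \<Phi> t (e t) = e t" if "t \<in> I" for t
    unfolding e_def
    by (rule theI', rule Banach_fix[OF assms(1-4) maps[OF that] contraction[OF that]])
  show "dist (e t) x \<le> dist (\<Phi> t x) x / (1 - c)" if "t \<in> I" "x \<in> S" for t x
  proof -
    have "dist (e t) x \<le> dist (\<Phi> t (e t)) (\<Phi> t x) + dist (\<Phi> t x) x"
      using fixpoint[OF that(1)] dist_triangle[of "e t" x "\<Phi> t x"] by simp
    also have "\<dots> \<le> c * dist (e t) x + dist (\<Phi> t x) x"
      using contraction[OF that(1) _ that(2), of "e t"] fixpoint[OF that(1)] by linarith
    finally show ?thesis
      using \<open>c < 1\<close> by (simp add: field_simps)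
  qed
  show "(K / (1 - c))-lipschitz_on I e"
  proof (rule lipschitz_onI)
    fix s t assume "s \<in> I" "t \<in> I"
    have "dist (e s) (e t) \<le> dist (\<Phi> s (e s)) (\<Phi> s (e t)) + dist (\<Phi> s (e t)) (\<Phi> t (e t))"
      using fixpoint[OF \<open>s \<in> I\<close>] fixpoint[OF \<open>t \<in> I\<close>] dist_triangle by metis
    also have "\<dots> \<le> c * dist (e s) (e t) + K * dist s t"
      using contraction parameter fixpoint \<open>s \<in> I\<close> \<open>t \<in> I\<close> by (meson add_mono)
    finally show "dist (e s) (e t) \<le> K / (1 - c) * dist s t"
      using \<open>c < 1\<close> by (simp add: field_simps)
  qed (use assms in simp)
qed

section \<open>Square matrices as a Banach algebra\<close>

(* The library's exp lives in Banach algebras, which real^'n^'n is not; sqmat carries the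
   matrix product and the operator norm, and mexp_eq_Rep_exp connects the two exponentials. *)
typedef 'n::finite sqmat = "UNIV :: (real^'n^'n) set"
  morphisms Rep_sqmat Abs_sqmat by simp

setup_lifting type_definition_sqmat

instantiation sqmat :: (finite) real_vector
begin
lift_definition zero_sqmat :: "'a sqmat" is 0 .
lift_definition plus_sqmat :: "'a sqmat \<Rightarrow> 'a sqmat \<Rightarrow> 'a sqmat" is "(+)" .
lift_definition minus_sqmat :: "'a sqmat \<Rightarrow> 'a sqmat \<Rightarrow> 'a sqmat" is "(-)" .
lift_definition uminus_sqmat :: "'a sqmat \<Rightarrow> 'a sqmat" is uminus .
lift_definition scaleR_sqmat :: "real \<Rightarrow> 'a sqmat \<Rightarrow> 'a sqmat" is scaleR .
instance by standard (transfer, simp add: algebra_simps)+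
end

instantiation sqmat :: (finite) ring_1
begin
lift_definition one_sqmat :: "'a sqmat" is "mat 1" .
lift_definition times_sqmat :: "'a sqmat \<Rightarrow> 'a sqmat \<Rightarrow> 'a sqmat" is "(**)" .
instance
proof
  fix a b c :: "'a sqmat"
  show "a * b * c = a * (b * c)" by transfer (simp add: matrix_mul_assoc)
  show "1 * a = a" by transfer simp
  show "a * 1 = a" by transfer simp
  show "(a + b) * c = a * c + b * c"
    by transfer (vector matrix_matrix_mult_def sum.distrib[symmetric] field_simps)
  show "a * (b + c) = a * b + a * c" by transfer (simp add: matrix_add_ldistrib)
  show "(0::'a sqmat) \<noteq> 1" by transfer (simp add: mat_def vec_eq_iff)
qed
end

instance sqmat :: (finite) real_algebra_1
  by standard (transfer, simp add: scalar_matrix_assoc matrix_scalar_ac)+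


instantiation sqmat :: (finite) real_normed_algebra_1
begin
lift_definition norm_sqmat :: "'a sqmat \<Rightarrow> real" is "\<lambda>A. onorm ((*v) A)" .
definition dist_sqmat :: "'a sqmat \<Rightarrow> 'a sqmat \<Rightarrow> real" where
  "dist_sqmat a b = norm (a - b)"
definition sgn_sqmat :: "'a sqmat \<Rightarrow> 'a sqmat" where
  "sgn_sqmat x = inverse (norm x) *\<^sub>R x"
definition uniformity_sqmat :: "('a sqmat \<times> 'a sqmat) filter" where
  "uniformity_sqmat = (INF e\<in>{0<..}. principal {(x, y). dist x y < e})"
definition open_sqmat :: "'a sqmat set \<Rightarrow> bool" where
  "open_sqmat S = (\<forall>x\<in>S. \<forall>\<^sub>F (x', y) in uniformity. x' = x \<longrightarrow> y \<in> S)"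
instance
proof
  fix a b :: "'a sqmat" and r :: real and S :: "'a sqmat set"
  show "dist a b = norm (a - b)" by (simp add: dist_sqmat_def)
  show "sgn a = inverse (norm a) *\<^sub>R a" by (simp add: sgn_sqmat_def)
  show "(uniformity :: ('a sqmat \<times> 'a sqmat) filter) = (INF e\<in>{0<..}. principal {(x, y). dist x y < e})"
    by (simp add: uniformity_sqmat_def)
  show "open S = (\<forall>x\<in>S. \<forall>\<^sub>F (x', y) in uniformity. x' = x \<longrightarrow> y \<in> S)"
    by (simp add: open_sqmat_def)
  show "(norm a = 0) = (a = 0)"
    by transfer (simp add: onorm_eq_0 matrix_eq)
  show "norm (a + b) \<le> norm a + norm b"
  proof transfer
    fix A B :: "real^'a^'a"
    show "onorm ((*v) (A + B)) \<le> onorm ((*v) A) + onorm ((*v) B)"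
      using onorm_triangle[of "(*v) A" "(*v) B"]
      by (simp add: matrix_vector_mult_add_rdistrib[abs_def] matrix_vector_mul_bounded_linear)
  qed
  show "norm (r *\<^sub>R a) = \<bar>r\<bar> * norm a"
  proof transfer
    fix s :: real and A :: "real^'a^'a"
    show "onorm ((*v) (s *\<^sub>R A)) = \<bar>s\<bar> * onorm ((*v) A)"
      using onorm_scaleR[of "(*v) A" s] by (simp add: scaleR_matrix_vector_assoc[abs_def])
  qed
  show "norm (a * b) \<le> norm a * norm b"
  proof transfer
    fix A B :: "real^'a^'a"
    show "onorm ((*v) (A ** B)) \<le> onorm ((*v) A) * onorm ((*v) B)"
      using onorm_compose[of "(*v) A" "(*v) B"]
      by (simp add: o_def matrix_vector_mul_assoc[abs_def] matrix_vector_mul_bounded_linear)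
  qed
  show "norm (1::'a sqmat) = 1"
  proof transfer
    have "(*v) (mat 1 :: real^'a^'a) = (\<lambda>x. x)" by (simp add: fun_eq_iff)
    then show "onorm ((*v) (mat 1 :: real^'a^'a)) = 1" by (simp add: onorm_id)
  qed
qed
end

lemma norm_Rep_sqmat_le: "norm (Rep_sqmat x) \<le> real CARD('n)^2 * norm (x :: 'n::finite sqmat)"
proof -
  let ?A = "Rep_sqmat x"
  have "norm ?A \<le> (\<Sum>i\<in>UNIV. norm (?A $ i))"
    unfolding norm_vec_def by (rule L2_set_le_sum) simp
  also have "\<dots> \<le> (\<Sum>i\<in>(UNIV::'n set). \<Sum>j\<in>(UNIV::'n set). \<bar>?A $ i $ j\<bar>)"
    by (intro sum_mono norm_le_l1_cart)
  also have "\<dots> \<le> (\<Sum>i\<in>(UNIV::'n set). \<Sum>j\<in>(UNIV::'n set). norm x)"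
    unfolding norm_sqmat.rep_eq by (intro sum_mono matrix_component_le_onorm)
  also have "\<dots> = real CARD('n)^2 * norm x"
    by (simp add: power2_eq_square)
  finally show ?thesis .
qed

lemma norm_Abs_sqmat_le: "norm (Abs_sqmat A :: 'n::finite sqmat) \<le> real CARD('n)^2 * norm A"
proof -
  have "\<bar>A $ i $ j\<bar> \<le> norm A" for i j
    using component_le_norm_cart[of "A $ i" j] Finite_Cartesian_Product.norm_nth_le[of A i] by linarith
  then show ?thesis
    using onorm_le_matrix_component[of A] by (simp add: norm_sqmat.abs_eq power2_eq_square)
qed

lemma bounded_linear_Rep_sqmat: "bounded_linear (Rep_sqmat :: 'n::finite sqmat \<Rightarrow> _)"
  by (rule bounded_linear_intro[where K = "real CARD('n)^2"])
     (simp_all add: plus_sqmat.rep_eq scaleR_sqmat.rep_eq norm_Rep_sqmat_le mult.commute[of _ "real CARD('n)^2"])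

lemma bounded_linear_Abs_sqmat: "bounded_linear (Abs_sqmat :: _ \<Rightarrow> 'n::finite sqmat)"
  by (rule bounded_linear_intro[where K = "real CARD('n)^2"])
     (simp_all add: plus_sqmat.abs_eq scaleR_sqmat.abs_eq norm_Abs_sqmat_le mult.commute[of _ "real CARD('n)^2"])

instance sqmat :: (finite) banach
proof
  fix X :: "nat \<Rightarrow> 'a sqmat"
  assume "Cauchy X"
  then have "Cauchy (\<lambda>n. Rep_sqmat (X n))"
    by (rule bounded_linear.Cauchy[OF bounded_linear_Rep_sqmat])
  then obtain A where "(\<lambda>n. Rep_sqmat (X n)) \<longlonglongrightarrow> A"
    by (auto simp: Cauchy_convergent_iff convergent_def)
  then have "(\<lambda>n. Abs_sqmat (Rep_sqmat (X n))) \<longlonglongrightarrow> Abs_sqmat A"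
    by (rule bounded_linear.tendsto[OF bounded_linear_Abs_sqmat])
  then show "convergent X"
    by (auto simp: convergent_def Rep_sqmat_inverse)
qed

lemma Rep_sqmat_power: "Rep_sqmat (x ^ k) = mpow (Rep_sqmat x) k"
  by (induct k) (simp_all add: one_sqmat.rep_eq times_sqmat.rep_eq)

lemma mexp_eq_Rep_exp: "mexp A = Rep_sqmat (exp (Abs_sqmat A))"
proof -
  have "(\<lambda>k. Rep_sqmat (Abs_sqmat A ^ k /\<^sub>R fact k)) sums Rep_sqmat (exp (Abs_sqmat A))"
    by (rule bounded_linear.sums[OF bounded_linear_Rep_sqmat exp_converges])
  then have "(\<lambda>k. (1 / fact k) *\<^sub>R mpow A k) sums Rep_sqmat (exp (Abs_sqmat A))"
    by (simp add: scaleR_sqmat.rep_eq Rep_sqmat_power Abs_sqmat_inverse divide_inverse_commute)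
  then show ?thesis
    unfolding mexp_def by (rule sums_unique[symmetric])
qed

lift_definition transpose_sqmat :: "'n::finite sqmat \<Rightarrow> 'n sqmat" is transpose .

lemma transpose_sqmat_transpose_sqmat [simp]: "transpose_sqmat (transpose_sqmat x) = x"
  by transfer simp

lemma transpose_sqmat_mult: "transpose_sqmat (x * y) = transpose_sqmat y * transpose_sqmat x"
  by transfer (rule matrix_transpose_mul)

lemma transpose_sqmat_scaleR: "transpose_sqmat (r *\<^sub>R x) = r *\<^sub>R transpose_sqmat x"
  by transfer (rule transpose_scalar)

lemma transpose_sqmat_one [simp]: "transpose_sqmat 1 = 1"
  by transfer simp

lemma transpose_sqmat_power: "transpose_sqmat (x ^ k) = transpose_sqmat x ^ k"
  by (induct k) (simp_all add: transpose_sqmat_mult power_commutes)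

lemma bounded_linear_transpose_sqmat: "bounded_linear (transpose_sqmat :: 'n::finite sqmat \<Rightarrow> _)"
proof -
  have "linear (transpose :: real^'n^'n \<Rightarrow> real^'n^'n)"
    by (rule linearI) (simp_all add: transpose_def vec_eq_iff)
  then have "bounded_linear (\<lambda>x :: 'n sqmat. Abs_sqmat (transpose (Rep_sqmat x)))"
    by (intro bounded_linear_compose[OF bounded_linear_Abs_sqmat]
        bounded_linear_compose[OF _ bounded_linear_Rep_sqmat])
       (simp add: linear_conv_bounded_linear)
  then show ?thesis
    by (simp add: transpose_sqmat_def map_fun_def comp_def)
qed

lemma transpose_sqmat_exp: "transpose_sqmat (exp x) = exp (transpose_sqmat x)"
proof -
  have "(\<lambda>k. transpose_sqmat (x ^ k /\<^sub>R fact k)) sums transpose_sqmat (exp x)"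
    by (rule bounded_linear.sums[OF bounded_linear_transpose_sqmat exp_converges])
  moreover have "transpose_sqmat (x ^ k /\<^sub>R fact k) = transpose_sqmat x ^ k /\<^sub>R fact k" for k
    by (simp only: transpose_sqmat_scaleR transpose_sqmat_power)
  ultimately show ?thesis
    using sums_unique2[OF _ exp_converges] by simp
qed

lemma transpose_sqmat_commutant:
  assumes "transpose_sqmat ` S \<subseteq> S" and "x \<in> commutant S"
  shows "transpose_sqmat x \<in> commutant S"
proof -
  have "transpose_sqmat (x * transpose_sqmat y) = transpose_sqmat (transpose_sqmat y * x)" if "y \<in> S" for y
    using assms that by (simp add: commutant_iff image_subset_iff)
  then show ?thesis
    by (simp add: commutant_iff transpose_sqmat_mult)
qed

lemma Abs_sqmat_eq_iff: "Abs_sqmat A = x \<longleftrightarrow> A = Rep_sqmat x"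
  by (metis Abs_sqmat_inverse Rep_sqmat_inverse UNIV_I)

lemma Abs_sqmat_mult: "Abs_sqmat (A ** B) = Abs_sqmat A * Abs_sqmat B"
  by (simp add: times_sqmat.abs_eq)

lemma Abs_sqmat_diff: "Abs_sqmat (A - B) = Abs_sqmat A - Abs_sqmat B"
  by (simp add: minus_sqmat.abs_eq)

lemma Abs_sqmat_scaleR: "Abs_sqmat (r *\<^sub>R A) = r *\<^sub>R Abs_sqmat A"
  by (simp add: scaleR_sqmat.abs_eq)

lemma Abs_sqmat_transpose: "Abs_sqmat (transpose A) = transpose_sqmat (Abs_sqmat A)"
  by (simp add: transpose_sqmat.abs_eq)

lemmas Abs_sqmat_simps =
  Abs_sqmat_mult Abs_sqmat_diff Abs_sqmat_scaleR Abs_sqmat_transpose Rep_sqmat_inverse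

lemma normal_mat_iff_sqmat:
  "normal_mat C \<longleftrightarrow>
    Abs_sqmat C * transpose_sqmat (Abs_sqmat C) = transpose_sqmat (Abs_sqmat C) * Abs_sqmat C"
  unfolding normal_mat_def by (simp add: Abs_sqmat_inject flip: Abs_sqmat_simps)

lemma Fmap_normal:
  assumes "normal_mat C"
  shows "Fmap T C = mexp (T *\<^sub>R C)"
proof -
  let ?c = "Abs_sqmat C"
  have "(T *\<^sub>R (?c - transpose_sqmat ?c)) * (T *\<^sub>R transpose_sqmat ?c)
      = (T *\<^sub>R transpose_sqmat ?c) * (T *\<^sub>R (?c - transpose_sqmat ?c))"
    using assms by (simp add: normal_mat_iff_sqmat algebra_simps)
  then have "exp (T *\<^sub>R (?c - transpose_sqmat ?c)) * exp (T *\<^sub>R transpose_sqmat ?c) = exp (T *\<^sub>R ?c)"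
    by (simp add: exp_add_commuting[symmetric] algebra_simps)
  then show ?thesis
    by (simp add: Fmap_def mexp_eq_Rep_exp Abs_sqmat_simps flip: times_sqmat.rep_eq)
qed

lemma char_eq_normal_iff:
  assumes "normal_mat C"
  shows "char_eq T R lam C \<longleftrightarrow>
    lam *\<^sub>R Abs_sqmat C = transpose_sqmat (exp (T *\<^sub>R Abs_sqmat C)) * (Abs_sqmat R - exp (T *\<^sub>R Abs_sqmat C))"
proof -
  let ?F = "exp (T *\<^sub>R Abs_sqmat C)"
  have "Fmap T C = Rep_sqmat ?F"
    by (simp add: Fmap_normal[OF assms] mexp_eq_Rep_exp Abs_sqmat_scaleR)
  moreover have "transpose_sqmat ?F * (Abs_sqmat R - ?F)
      = Abs_sqmat (transpose (Rep_sqmat ?F) ** (R - Rep_sqmat ?F))"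
    by (simp add: Abs_sqmat_simps)
  ultimately show ?thesis
    unfolding char_eq_def by (simp add: Abs_sqmat_inject flip: Abs_sqmat_scaleR)
qed

lemma matrix_inv_Rep_sqmat:
  assumes "x * y = 1" and "y * x = 1"
  shows "matrix_inv (Rep_sqmat x) = Rep_sqmat y"
proof -
  have inverse: "Rep_sqmat x ** Rep_sqmat y = mat 1" "Rep_sqmat y ** Rep_sqmat x = mat 1"
    using assms by (simp_all flip: times_sqmat.rep_eq one_sqmat.rep_eq)
  define M where "M = matrix_inv (Rep_sqmat x)"
  have "Rep_sqmat x ** M = mat 1 \<and> M ** Rep_sqmat x = mat 1"
    unfolding M_def matrix_inv_def by (rule someI[of _ "Rep_sqmat y"]) (use inverse in simp)
  have "M = (Rep_sqmat y ** Rep_sqmat x) ** M"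
    by (simp add: inverse)
  also have "\<dots> = Rep_sqmat y ** (Rep_sqmat x ** M)"
    by (simp add: matrix_mul_assoc)
  also have "\<dots> = Rep_sqmat y"
    using \<open>Rep_sqmat x ** M = mat 1 \<and> _\<close> by simp
  finally show ?thesis
    by (simp add: M_def)
qed

section \<open>Solutions near a normal logarithm\<close>

(* The remainder of x \<mapsto> exp (x^T) (1 - exp x) after its linear part -x, which is quadratically
   small when x and x^T commute (nonlinear_part_lipschitz). *)
definition nonlinear_part :: "'n::finite sqmat \<Rightarrow> 'n sqmat" where
  "nonlinear_part x = exp (transpose_sqmat x) * (1 - exp x) + x"

lemma nonlinear_part_zero [simp]: "nonlinear_part 0 = 0"
  by (simp add: nonlinear_part_def)

lemma nonlinear_part_eq_exp_tail:
  assumes "x * transpose_sqmat x = transpose_sqmat x * x"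
  shows "nonlinear_part x = exp_tail (transpose_sqmat x) - exp_tail (transpose_sqmat x + x)"
  using exp_add_commuting[of "transpose_sqmat x" x] assms
  by (simp add: nonlinear_part_def exp_tail_def algebra_simps)

locale normal_logarithm =
  fixes l :: "'n::finite sqmat" and T :: real
  assumes T_pos: "0 < T"
    and normal: "l * transpose_sqmat l = transpose_sqmat l * l"
begin

(* A closed subalgebra, commutative because l is normal, and stable under transposition. *)
abbreviation \<A> :: "'n sqmat set" where
  "\<A> \<equiv> commutant (commutant {l, transpose_sqmat l})"

lemma l_mem: "l \<in> \<A>" and transpose_l_mem: "transpose_sqmat l \<in> \<A>"
  using subset_commutant_commutant[of "{l, transpose_sqmat l}"] by auto

lemma commute: "x \<in> \<A> \<Longrightarrow> y \<in> \<A> \<Longrightarrow> x * y = y * x"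
  by (rule commutant_commutant_commute) (use normal in \<open>auto simp: commutant_iff\<close>)

lemma transpose_mem: "x \<in> \<A> \<Longrightarrow> transpose_sqmat x \<in> \<A>"
proof -
  have "transpose_sqmat ` {l, transpose_sqmat l} \<subseteq> {l, transpose_sqmat l}"
    by auto
  then have "transpose_sqmat ` commutant {l, transpose_sqmat l} \<subseteq> commutant {l, transpose_sqmat l}"
    using transpose_sqmat_commutant by blast
  then show "x \<in> \<A> \<Longrightarrow> transpose_sqmat x \<in> \<A>"
    by (rule transpose_sqmat_commutant)
qed

definition tp_norm :: real where
  "tp_norm = onorm (transpose_sqmat :: 'n sqmat \<Rightarrow> 'n sqmat)"

lemma tp_norm_nonneg: "0 \<le> tp_norm"
  unfolding tp_norm_def by (rule onorm_pos_le[OF bounded_linear_transpose_sqmat])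

lemma norm_transpose_le: "norm (transpose_sqmat x) \<le> tp_norm * norm (x :: 'n sqmat)"
  unfolding tp_norm_def by (rule onorm[OF bounded_linear_transpose_sqmat])

(* q = (R R^T)^{-1} for R = exp l *)
definition q :: "'n sqmat" where
  "q = exp (- (l + transpose_sqmat l))"

lemma q_mem: "q \<in> \<A>"
  unfolding q_def by (intro commutant_exp commutant_uminus commutant_add l_mem transpose_l_mem)

lemma exp_l_transpose_l: "exp l * exp (transpose_sqmat l) = exp (l + transpose_sqmat l)"
  by (simp add: exp_add_commuting normal)

lemma exp_l_transpose_l_q: "exp (l + transpose_sqmat l) * q = 1"
  unfolding q_def by (rule exp_minus_inverse)

lemma q_exp_l_transpose_l: "q * exp (l + transpose_sqmat l) = 1"
  unfolding q_def by (subst exp_add_commuting[symmetric]) (simp_all add: algebra_simps)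

definition lip_const :: real where
  "lip_const = 12 * (tp_norm + 1)\<^sup>2"

lemma lip_const_pos: "0 < lip_const"
  using tp_norm_nonneg by (simp add: lip_const_def)

lemma nonlinear_part_lipschitz:
  assumes "x \<in> \<A>" "y \<in> \<A>" "norm x \<le> \<rho>" "norm y \<le> \<rho>"
    and small: "(tp_norm + 1) * \<rho> \<le> 1/2"
  shows "norm (nonlinear_part x - nonlinear_part y) \<le> lip_const * \<rho> * norm (x - y)"
proof -
  let ?K = "tp_norm + 1"
  have "0 \<le> ?K"
    using tp_norm_nonneg by simp
  have tp_le: "norm (transpose_sqmat z) \<le> ?K * norm z" for z :: "'n sqmat"
  proof -
    have "tp_norm * norm z \<le> ?K * norm z"
      by (simp add: algebra_simps)
    then show ?thesis
      using norm_transpose_le[of z] by linarith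
  qed
  have tp_add_le: "norm (transpose_sqmat z + z) \<le> ?K * norm z" for z :: "'n sqmat"
    using norm_transpose_le[of z] norm_triangle_ineq[of "transpose_sqmat z" z]
    by (simp add: algebra_simps)
  have "norm (exp_tail (transpose_sqmat x) - exp_tail (transpose_sqmat y)) \<le> 6 * ?K\<^sup>2 * \<rho> * norm (x - y)"
    using assms by (intro exp_tail_lipschitz_linear[OF bounded_linear_transpose_sqmat \<open>0 \<le> ?K\<close> tp_le])
      (auto simp: commute transpose_mem)
  moreover have "norm (exp_tail (transpose_sqmat x + x) - exp_tail (transpose_sqmat y + y))
      \<le> 6 * ?K\<^sup>2 * \<rho> * norm (x - y)"
    using assms
    by (intro exp_tail_lipschitz_linear[where f = "\<lambda>z. transpose_sqmat z + z", OF
          bounded_linear_add[OF bounded_linear_transpose_sqmat bounded_linear_ident] \<open>0 \<le> ?K\<close> tp_add_le])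
      (auto simp: commute commutant_add transpose_mem)
  moreover have "x * transpose_sqmat x = transpose_sqmat x * x" "y * transpose_sqmat y = transpose_sqmat y * y"
    using assms(1,2) by (simp_all add: commute transpose_mem)
  ultimately show ?thesis
    using norm_triangle_ineq4[of "exp_tail (transpose_sqmat x) - exp_tail (transpose_sqmat y)"
        "exp_tail (transpose_sqmat x + x) - exp_tail (transpose_sqmat y + y)"]
    by (simp add: nonlinear_part_eq_exp_tail lip_const_def algebra_simps)
qed

(* Chosen so that each \<Phi> t with 0 \<le> t \<le> \<delta> maps \<A> \<inter> cball 0 radius into itself as a
   1/2-contraction. *)
definition radius :: real where
  "radius = min (1 / (4 * lip_const)) (1 / (2 * (tp_norm + 1)))"

definition \<delta> :: real where
  "\<delta> = min (T / (4 * (norm q + 1))) (T * radius / (2 * (norm (q * l) + 1)))"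

lemma radius_pos: "0 < radius"
  using lip_const_pos tp_norm_nonneg by (simp add: radius_def)

lemma lip_const_radius: "lip_const * radius \<le> 1/4"
proof -
  have "lip_const * radius \<le> lip_const * (1 / (4 * lip_const))"
    using lip_const_pos by (intro mult_left_mono) (simp_all add: radius_def)
  then show ?thesis
    using lip_const_pos by simp
qed

lemma radius_small: "(tp_norm + 1) * radius \<le> 1/2"
proof -
  let ?c = "tp_norm + 1"
  have "?c * radius \<le> ?c * (1 / (2 * ?c))"
    using tp_norm_nonneg by (intro mult_left_mono) (simp_all add: radius_def)
  also have "\<dots> = 1/2"
    using tp_norm_nonneg by simp
  finally show ?thesis .
qed

lemma \<delta>_pos: "0 < \<delta>"
  using T_pos radius_pos
  by (auto simp: \<delta>_def intro!: divide_pos_pos mult_pos_pos add_nonneg_pos)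

lemma parameter_bounds:
  assumes "t \<in> {0..\<delta>}"
  shows "t / T * norm q \<le> 1/4" and "t / T * norm (q * l) \<le> radius / 2"
proof -
  have "t / T \<le> 1 / (4 * (norm q + 1))"
    using assms T_pos by (simp add: \<delta>_def field_simps)
  then have "t / T * norm q \<le> 1 / (4 * (norm q + 1)) * norm q"
    by (rule mult_right_mono) simp
  also have "\<dots> \<le> 1/4"
    by (simp add: divide_le_eq_1 add_nonneg_pos)
  finally show "t / T * norm q \<le> 1/4" .
  have "t / T \<le> radius / (2 * (norm (q * l) + 1))"
    using assms T_pos by (simp add: \<delta>_def field_simps)
  then have "t / T * norm (q * l) \<le> radius / (2 * (norm (q * l) + 1)) * norm (q * l)"
    by (rule mult_right_mono) simp
  also have "\<dots> \<le> radius / 2"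
    using radius_pos by (simp add: field_simps divide_le_eq add_pos_nonneg mult_left_mono)
  finally show "t / T * norm (q * l) \<le> radius / 2" .
qed

abbreviation cball_\<A> :: "'n sqmat set" where
  "cball_\<A> \<equiv> \<A> \<inter> cball 0 radius"

definition \<Phi> :: "real \<Rightarrow> 'n sqmat \<Rightarrow> 'n sqmat" where
  "\<Phi> t x = nonlinear_part x - (t / T) *\<^sub>R (q * (l + x))"

lemma \<Phi>_zero: "\<Phi> t 0 = - (t / T) *\<^sub>R (q * l)"
  by (simp add: \<Phi>_def)

lemma \<Phi>_mem: "x \<in> \<A> \<Longrightarrow> \<Phi> t x \<in> \<A>"
  unfolding \<Phi>_def nonlinear_part_def
  by (intro commutant_diff commutant_add commutant_mult commutant_exp commutant_one
      commutant_scaleR transpose_mem q_mem l_mem)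

lemma \<Phi>_contraction:
  assumes "t \<in> {0..\<delta>}" "x \<in> cball_\<A>" "y \<in> cball_\<A>"
  shows "dist (\<Phi> t x) (\<Phi> t y) \<le> 1/2 * dist x y"
proof -
  have "\<Phi> t x - \<Phi> t y = (nonlinear_part x - nonlinear_part y) - (t / T) *\<^sub>R (q * (x - y))"
    by (simp add: \<Phi>_def algebra_simps)
  then have "norm (\<Phi> t x - \<Phi> t y)
      \<le> norm (nonlinear_part x - nonlinear_part y) + t / T * norm (q * (x - y))"
    using norm_triangle_ineq4[of _ "(t / T) *\<^sub>R (q * (x - y))"] assms(1) T_pos by simp
  also have "\<dots> \<le> lip_const * radius * norm (x - y) + t / T * (norm q * norm (x - y))"
    using nonlinear_part_lipschitz[of x y radius] radius_small assms T_pos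
    by (intro add_mono mult_left_mono norm_mult_ineq) auto
  also have "\<dots> = (lip_const * radius + t / T * norm q) * norm (x - y)"
    by (simp add: algebra_simps)
  also have "\<dots> \<le> 1/2 * norm (x - y)"
  proof (rule mult_right_mono)
    show "lip_const * radius + t / T * norm q \<le> 1/2"
      using lip_const_radius parameter_bounds(1)[OF assms(1)] by linarith
  qed simp
  finally show ?thesis
    by (simp add: dist_norm)
qed

lemma \<Phi>_maps: "t \<in> {0..\<delta>} \<Longrightarrow> \<Phi> t ` cball_\<A> \<subseteq> cball_\<A>"
proof (intro image_subsetI IntI)
  fix x assume t: "t \<in> {0..\<delta>}" and x: "x \<in> cball_\<A>"
  then show "\<Phi> t x \<in> \<A>"
    by (simp add: \<Phi>_mem)
  have "0 \<in> cball_\<A>"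
    using radius_pos by (simp add: commutant_zero)
  then have "norm (\<Phi> t x - \<Phi> t 0) \<le> 1/2 * radius"
    using \<Phi>_contraction[OF t x] x by (fastforce simp: dist_norm)
  moreover have "norm (\<Phi> t 0) \<le> radius / 2"
    using parameter_bounds(2)[OF t] t T_pos by (simp add: \<Phi>_zero)
  ultimately show "\<Phi> t x \<in> cball 0 radius"
    using norm_triangle_ineq2[of "\<Phi> t x" "\<Phi> t 0"] by simp
qed

lemma \<Phi>_lipschitz_in_parameter:
  assumes "x \<in> cball_\<A>"
  shows "dist (\<Phi> s x) (\<Phi> t x) \<le> norm q * (norm l + radius) / T * dist s t"
proof -
  have "\<Phi> s x - \<Phi> t x = ((t - s) / T) *\<^sub>R (q * (l + x))"
    by (simp add: \<Phi>_def algebra_simps diff_divide_distrib)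
  moreover have "norm (q * (l + x)) \<le> norm q * (norm l + radius)"
    using assms norm_triangle_ineq[of l x]
    by (intro order_trans[OF norm_mult_ineq] mult_left_mono) auto
  ultimately show ?thesis
    using T_pos
    by (simp add: dist_norm dist_real_def abs_minus_commute divide_simps)
       (metis abs_ge_zero mult.commute mult_left_mono)
qed

lemma \<Phi>_fixpoint_iff: "\<Phi> t x = x \<longleftrightarrow> exp (transpose_sqmat x) * (1 - exp x) = (t / T) *\<^sub>R (q * (l + x))"
  by (auto simp: \<Phi>_def nonlinear_part_def)

lemma \<Phi>_fixpoint_second_order:
  assumes "t \<in> {0..\<delta>}" "x \<in> cball_\<A>" "\<Phi> t x = x" and small: "norm x \<le> 2 * (t / T * norm (q * l))"
  shows "norm (x + (t / T) *\<^sub>R (q * l))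
    \<le> (4 * lip_const * (norm (q * l))\<^sup>2 + 2 * norm q * norm (q * l)) / T\<^sup>2 * t\<^sup>2"
proof -
  define a where "a = t / T"
  have "a \<ge> 0"
    using assms(1) T_pos by (simp add: a_def)
  have quadratic: "norm (nonlinear_part x) \<le> lip_const * norm x * norm x"
  proof -
    have "(tp_norm + 1) * norm x
        \<le> (tp_norm + 1) * radius"
      using assms(2) tp_norm_nonneg by (intro mult_left_mono) auto
    then show ?thesis
      using nonlinear_part_lipschitz[of x 0 "norm x"] assms(2) radius_small
      by (simp add: commutant_zero)
  qed
  have "x + a *\<^sub>R (q * l) = nonlinear_part x - a *\<^sub>R (q * x)"
    using assms(3) by (simp add: \<Phi>_def a_def algebra_simps)
  then have "norm (x + a *\<^sub>R (q * l)) \<le> norm (nonlinear_part x) + norm (a *\<^sub>R (q * x))"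
    by (metis norm_triangle_ineq4)
  moreover have "norm (a *\<^sub>R (q * x)) \<le> a * (norm q * norm x)"
    using \<open>a \<ge> 0\<close> by (simp add: norm_mult_ineq mult_left_mono)
  ultimately have "norm (x + a *\<^sub>R (q * l)) \<le> lip_const * norm x * norm x + a * (norm q * norm x)"
    using quadratic by linarith
  also have "\<dots> \<le> lip_const * (2 * (a * norm (q * l))) * (2 * (a * norm (q * l)))
      + a * (norm q * (2 * (a * norm (q * l))))"
    using small lip_const_pos \<open>a \<ge> 0\<close> unfolding a_def[symmetric]
    by (intro add_mono mult_mono mult_left_mono) auto
  also have "\<dots> = (4 * lip_const * (norm (q * l))\<^sup>2 + 2 * norm q * norm (q * l)) / T\<^sup>2 * t\<^sup>2"
    using T_pos by (simp add: a_def field_simps power2_eq_square)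
  finally show ?thesis
    by (simp add: a_def)
qed

lemma small_solution_curve:
  obtains e :: "real \<Rightarrow> 'n sqmat" and M where
    "\<And>t. t \<in> {0..\<delta>} \<Longrightarrow>
      e t \<in> \<A> \<and> exp (transpose_sqmat (e t)) * (1 - exp (e t)) = (t / T) *\<^sub>R (q * (l + e t))"
    and "e 0 = 0" and "continuous_on {0..\<delta>} e"
    and "\<And>t. t \<in> {0..\<delta>} \<Longrightarrow> norm (e t + (t / T) *\<^sub>R (q * l)) \<le> M * t\<^sup>2"
proof -
  have complete: "complete cball_\<A>"
    by (simp add: complete_eq_closed closed_Int closed_commutant)
  have "0 \<in> cball_\<A>"
    using radius_pos by (simp add: commutant_zero)
  have K: "0 \<le> norm q * (norm l + radius) / T"
    using T_pos radius_pos by simp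
  obtain e where fixpoint: "\<And>t. t \<in> {0..\<delta>} \<Longrightarrow> e t \<in> cball_\<A> \<and> \<Phi> t (e t) = e t"
    and near: "\<And>t x. t \<in> {0..\<delta>} \<Longrightarrow> x \<in> cball_\<A> \<Longrightarrow> dist (e t) x \<le> dist (\<Phi> t x) x / (1 - 1/2)"
    and lipschitz: "(norm q * (norm l + radius) / T / (1 - 1/2))-lipschitz_on {0..\<delta>} e"
    by (rule uniform_contraction_fixpoint[where c = "1/2" and I = "{0..\<delta>}",
          OF complete _ _ _ K \<Phi>_maps \<Phi>_contraction \<Phi>_lipschitz_in_parameter];
        (assumption | use \<open>0 \<in> cball_\<A>\<close> in auto))
  have small: "norm (e t) \<le> 2 * (t / T * norm (q * l))" if "t \<in> {0..\<delta>}" for t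
    using near[OF that \<open>0 \<in> cball_\<A>\<close>] that T_pos by (simp add: \<Phi>_zero mult_ac)
  show ?thesis
  proof
    show "e t \<in> \<A> \<and> exp (transpose_sqmat (e t)) * (1 - exp (e t)) = (t / T) *\<^sub>R (q * (l + e t))"
      if "t \<in> {0..\<delta>}" for t
      using fixpoint[OF that] by (simp add: \<Phi>_fixpoint_iff)
    show "e 0 = 0"
      using small[of 0] \<delta>_pos by simp
    show "continuous_on {0..\<delta>} e"
      by (rule lipschitz_on_continuous_on[OF lipschitz])
    show "norm (e t + (t / T) *\<^sub>R (q * l))
        \<le> (4 * lip_const * (norm (q * l))\<^sup>2 + 2 * norm q * norm (q * l)) / T\<^sup>2 * t\<^sup>2"
      if "t \<in> {0..\<delta>}" for t
      using \<Phi>_fixpoint_second_order[OF that _ _ small[OF that]] fixpoint[OF that] by blast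
  qed
qed

lemma fixpoint_solves_char_eq:
  assumes x: "x \<in> \<A>" and eq: "exp (transpose_sqmat x) * (1 - exp x) = (t / T) *\<^sub>R (q * (l + x))"
  shows "(t / T) *\<^sub>R (l + x) = transpose_sqmat (exp (l + x)) * (exp l - exp (l + x))"
proof -
  have "transpose_sqmat (exp (l + x)) * (exp l - exp (l + x))
      = exp (transpose_sqmat x) * exp (transpose_sqmat l) * exp l * (1 - exp x)"
    by (simp add: exp_add_commuting commute l_mem x transpose_sqmat_mult transpose_sqmat_exp
        algebra_simps mult.assoc)
  also have "\<dots> = exp (l + transpose_sqmat l) * (exp (transpose_sqmat x) * (1 - exp x))"
    using commute[OF commutant_exp[OF transpose_mem[OF x]] commutant_exp[OF l_mem]]
      commute[OF commutant_exp[OF transpose_mem[OF x]] commutant_exp[OF transpose_l_mem]]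
      commute[OF commutant_exp[OF l_mem] commutant_exp[OF transpose_l_mem]]
    by (simp add: exp_l_transpose_l[symmetric] mult.assoc)
  also have "\<dots> = (t / T) *\<^sub>R (l + x)"
    by (simp add: eq exp_l_transpose_l_q flip: mult.assoc)
  finally show ?thesis ..
qed

lemma matrix_inv_exp_mult_transpose:
  "matrix_inv (Rep_sqmat (exp l) ** transpose (Rep_sqmat (exp l))) = Rep_sqmat q"
proof -
  have "Rep_sqmat (exp l) ** transpose (Rep_sqmat (exp l)) = Rep_sqmat (exp (l + transpose_sqmat l))"
    by (simp add: Abs_sqmat_eq_iff[symmetric] Abs_sqmat_simps transpose_sqmat_exp exp_l_transpose_l)
  then show ?thesis
    using matrix_inv_Rep_sqmat exp_l_transpose_l_q q_exp_l_transpose_l by metis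
qed

lemma solution_branch:
  obtains c :: "real \<Rightarrow> 'n sqmat" and M where
    "continuous_on {0..\<delta>} c" and "c 0 = (1 / T) *\<^sub>R l"
    and "\<And>t. t \<in> {0..\<delta>} \<Longrightarrow> c t * transpose_sqmat (c t) = transpose_sqmat (c t) * c t"
    and "\<And>t. t \<in> {0..\<delta>} \<Longrightarrow>
      t *\<^sub>R c t = transpose_sqmat (exp (T *\<^sub>R c t)) * (exp l - exp (T *\<^sub>R c t))"
    and "\<And>t. t \<in> {0..\<delta>} \<Longrightarrow> norm (c t - ((1 / T) *\<^sub>R l - (t / T\<^sup>2) *\<^sub>R (q * l))) \<le> M * t\<^sup>2"
proof -
  obtain e M where solves: "\<And>t. t \<in> {0..\<delta>} \<Longrightarrow>
      e t \<in> \<A> \<and> exp (transpose_sqmat (e t)) * (1 - exp (e t)) = (t / T) *\<^sub>R (q * (l + e t))"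
    and "e 0 = 0" and "continuous_on {0..\<delta>} e"
    and second_order: "\<And>t. t \<in> {0..\<delta>} \<Longrightarrow> norm (e t + (t / T) *\<^sub>R (q * l)) \<le> M * t\<^sup>2"
    using small_solution_curve by blast
  define c where "c t = (1 / T) *\<^sub>R (l + e t)" for t
  show ?thesis
  proof
    show "continuous_on {0..\<delta>} c"
      unfolding c_def by (intro continuous_intros \<open>continuous_on {0..\<delta>} e\<close>)
    show "c 0 = (1 / T) *\<^sub>R l"
      by (simp add: c_def \<open>e 0 = 0\<close>)
  next
    fix t assume t: "t \<in> {0..\<delta>}"
    define x where "x = e t"
    have x: "x \<in> \<A>" and eq: "exp (transpose_sqmat x) * (1 - exp x) = (t / T) *\<^sub>R (q * (l + x))"
      using solves[OF t] by (simp_all add: x_def)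
    have "c t \<in> \<A>"
      unfolding c_def x_def[symmetric] by (intro commutant_scaleR commutant_add l_mem x)
    then show "c t * transpose_sqmat (c t) = transpose_sqmat (c t) * c t"
      by (simp add: commute transpose_mem)
    have "T *\<^sub>R c t = l + x"
      using T_pos by (simp add: c_def x_def)
    then show "t *\<^sub>R c t = transpose_sqmat (exp (T *\<^sub>R c t)) * (exp l - exp (T *\<^sub>R c t))"
      using fixpoint_solves_char_eq[OF x eq] T_pos by (simp add: c_def x_def)
  next
    fix t assume t: "t \<in> {0..\<delta>}"
    have "c t - ((1 / T) *\<^sub>R l - (t / T\<^sup>2) *\<^sub>R (q * l)) = (1 / T) *\<^sub>R (e t + (t / T) *\<^sub>R (q * l))"
      using T_pos by (simp add: c_def algebra_simps power2_eq_square)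
    then show "norm (c t - ((1 / T) *\<^sub>R l - (t / T\<^sup>2) *\<^sub>R (q * l))) \<le> M / T * t\<^sup>2"
      using second_order[OF t] T_pos by (simp add: divide_right_mono)
  qed
qed

end

section \<open>The characteristic equation\<close>

lemma char_eq_zero_iff:
  assumes "normal_mat C"
  shows "char_eq T R 0 C \<longleftrightarrow> mexp (T *\<^sub>R C) = R"
proof -
  let ?y = "T *\<^sub>R Abs_sqmat C"
  have "transpose_sqmat (exp ?y) * (Abs_sqmat R - exp ?y) = 0 \<longleftrightarrow> Abs_sqmat R = exp ?y"
  proof
    assume "transpose_sqmat (exp ?y) * (Abs_sqmat R - exp ?y) = 0"
    then have "exp (- transpose_sqmat ?y) * transpose_sqmat (exp ?y) * (Abs_sqmat R - exp ?y) = 0"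
      by (simp add: mult.assoc)
    then show "Abs_sqmat R = exp ?y"
      by (simp add: transpose_sqmat_exp exp_minus_inverse[of "- transpose_sqmat ?y", simplified])
  qed simp
  moreover have "mexp (T *\<^sub>R C) = R \<longleftrightarrow> Abs_sqmat R = exp ?y"
    by (auto simp: mexp_eq_Rep_exp Abs_sqmat_scaleR Abs_sqmat_eq_iff)
  ultimately show ?thesis
    by (auto simp: char_eq_normal_iff[OF assms])
qed

lemma char_eq_solution_branch:
  fixes L R :: "real^'n^'n"
  assumes "T > 0" and "normal_mat L" and "mexp L = R"
  shows "\<exists>\<delta>>0. \<exists>Cf :: real \<Rightarrow> real^'n^'n.
            continuous_on {0..<\<delta>} Cf
          \<and> (\<forall>lam\<in>{0..<\<delta>}. char_eq T R lam (Cf lam) \<and> normal_mat (Cf lam))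
          \<and> Cf 0 = (1 / T) *\<^sub>R L
          \<and> (\<exists>K \<epsilon>. \<epsilon> > 0 \<and> (\<forall>lam\<in>{0..<\<delta>}. lam < \<epsilon> \<longrightarrow>
                norm (Cf lam - ((1 / T) *\<^sub>R L
                   - (lam / T\<^sup>2) *\<^sub>R (matrix_inv (R ** transpose R) ** L)))
                \<le> K * lam\<^sup>2))"
proof -
  let ?l = "Abs_sqmat L"
  interpret normal_logarithm ?l T
    using assms(1,2) by unfold_locales (simp_all add: normal_mat_iff_sqmat)
  obtain c M where cont: "continuous_on {0..\<delta>} c" and c0: "c 0 = (1 / T) *\<^sub>R ?l"
    and normal: "\<And>t. t \<in> {0..\<delta>} \<Longrightarrow> c t * transpose_sqmat (c t) = transpose_sqmat (c t) * c t"
    and solves: "\<And>t. t \<in> {0..\<delta>} \<Longrightarrow>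
      t *\<^sub>R c t = transpose_sqmat (exp (T *\<^sub>R c t)) * (exp ?l - exp (T *\<^sub>R c t))"
    and expansion: "\<And>t. t \<in> {0..\<delta>} \<Longrightarrow>
      norm (c t - ((1 / T) *\<^sub>R ?l - (t / T\<^sup>2) *\<^sub>R (q * ?l))) \<le> M * t\<^sup>2"
    using solution_branch by blast
  have R: "Abs_sqmat R = exp ?l"
    using assms(3) by (simp add: mexp_eq_Rep_exp Abs_sqmat_eq_iff)
  have inv: "matrix_inv (R ** transpose R) = Rep_sqmat q"
    using matrix_inv_exp_mult_transpose R by (simp add: Abs_sqmat_eq_iff)
  define Cf where "Cf t = Rep_sqmat (c t)" for t
  have Abs_Cf: "Abs_sqmat (Cf t) = c t" for t
    by (simp add: Cf_def Rep_sqmat_inverse)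
  show ?thesis
  proof (intro exI conjI ballI impI)
    show "\<delta> > 0"
      by (rule \<delta>_pos)
    show "continuous_on {0..<\<delta>} Cf"
      unfolding Cf_def
      by (intro bounded_linear.continuous_on[OF bounded_linear_Rep_sqmat] continuous_on_subset[OF cont]) auto
    show "Cf 0 = (1 / T) *\<^sub>R L"
      by (simp add: Cf_def c0 scaleR_sqmat.rep_eq Abs_sqmat_inverse)
    fix t assume "t \<in> {0..<\<delta>}"
    then have t: "t \<in> {0..\<delta>}"
      by simp
    show "normal_mat (Cf t)"
      by (simp add: normal_mat_iff_sqmat Abs_Cf normal[OF t])
    then show "char_eq T R t (Cf t)"
      by (simp add: char_eq_normal_iff Abs_Cf R solves[OF t])
    have "norm (Cf t - ((1 / T) *\<^sub>R L - (t / T\<^sup>2) *\<^sub>R (matrix_inv (R ** transpose R) ** L)))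
        = norm (Rep_sqmat (c t - ((1 / T) *\<^sub>R ?l - (t / T\<^sup>2) *\<^sub>R (q * ?l))))"
      by (simp add: inv Cf_def minus_sqmat.rep_eq scaleR_sqmat.rep_eq times_sqmat.rep_eq Abs_sqmat_inverse)
    also have "\<dots> \<le> real CARD('n)^2 * (M * t\<^sup>2)"
      by (rule order_trans[OF norm_Rep_sqmat_le]) (simp add: expansion[OF t] mult_left_mono)
    finally show "norm (Cf t - ((1 / T) *\<^sub>R L - (t / T\<^sup>2) *\<^sub>R (matrix_inv (R ** transpose R) ** L)))
        \<le> real CARD('n)^2 * M * t\<^sup>2"
      by (simp add: mult.assoc)
  qed (rule \<delta>_pos)
qed

theorem theorem2:
  fixes R :: "real^'n^'n" and T :: real
  assumes "T > 0" and "normal_mat R" and "P1 R"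
  shows "(\<forall>C :: real^'n^'n. normal_mat C \<longrightarrow> (char_eq T R 0 C \<longleftrightarrow> mexp (T *\<^sub>R C) = R))
    \<and> (\<forall>L :: real^'n^'n. normal_mat L \<and> mexp L = R \<longrightarrow>
         (\<exists>\<delta>>0. \<exists>Cf :: real \<Rightarrow> real^'n^'n.
            continuous_on {0..<\<delta>} Cf
          \<and> (\<forall>lam\<in>{0..<\<delta>}. char_eq T R lam (Cf lam) \<and> normal_mat (Cf lam))
          \<and> Cf 0 = (1 / T) *\<^sub>R L
          \<and> (\<exists>K \<epsilon>. \<epsilon> > 0 \<and> (\<forall>lam\<in>{0..<\<delta>}. lam < \<epsilon> \<longrightarrow>
                norm (Cf lam - ((1 / T) *\<^sub>R L
                   - (lam / T\<^sup>2) *\<^sub>R (matrix_inv (R ** transpose R) ** L)))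
                \<le> K * lam\<^sup>2))))"
  using char_eq_zero_iff char_eq_solution_branch[OF \<open>T > 0\<close>] by blast

end
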